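(* Let $r\geq1$, let $\mathbf a=(a_1,\ldots,a_r)$ be positive integers, let $D$ be a positive common multiple of $a_1,\ldots,a_r$, and let $j\geq 1$ be an integer dividing $a_i$ for some $1\leq i\leq r$. Put $\rho_j=e^{2\pi i/j}$ and $m(j)=\#\{i:\ j\mid a_i\}$. Then for all $n\geq 0$, $$ W_{j}(n,\mathbf a) =\rho_j^{-n}\left(R_{j,m(j)}\, n^{m(j)-1} + \cdots + R_{j,2}\, n + R_{j,1}\right), \qquad R_{j,m}=\frac{1}{D}\sum_{v=0}^{D-1}\rho_j^v\, d_{\mathbf a,m-1}(v)\ (1\leq m\leq m(j)).$$
   Context: $p_{\mathbf a}(n)$ is the number of integer solutions $(x_1,\ldots,x_r)$ of $a_1x_1+\cdots+a_rx_r=n$ with all $x_i\geq 0$. It is a quasi-polynomial: there are unique functions $d_{\mathbf a,m}:\mathbb N\to\mathbb Q$ ($0\leq m\leq r-1$) with $d_{\mathbf a,m}(n+D)=d_{\mathbf a,m}(n)$ and $p_{\mathbf a}(n)=\sum_{m=0}^{r-1}d_{\mathbf a,m}(n)n^m$ for all $n\geq0$. There are also unique polynomials $P_\lambda$, indexed by the $D$-th roots of unity $\lambda$, with $p_{\mathbf a}(n)=\sum_{\lambda^D=1}P_\lambda(n)\lambda^{-n}$ for all $n\geq 0$. The Sylvester wave is defined by $W_j(n,\mathbf a)=P_{\rho_j}(n)\rho_j^{-n}$ (i.e. $P_{\rho_j}$ is the polynomial part of the quasi-polynomial $\rho_j^n p_{\mathbf a}(n)$). *)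

theory Defs
  imports Complex_Main "HOL-Computational_Algebra.Polynomial"
begin

definition pfun :: "nat \<Rightarrow> (nat \<Rightarrow> nat) \<Rightarrow> nat \<Rightarrow> nat" where
  "pfun r a n = card {x :: nat \<Rightarrow> nat. (\<forall>i\<ge>r. x i = 0) \<and> (\<Sum>i<r. a i * x i) = n}"

text \<open>Quasi-polynomial coefficients d_{a,m} (m < r), D-periodic, with
  p(n) = sum_{m<r} d_m(n) n^m; set to 0 for m >= r to make them unique.\<close>
definition dcoef :: "nat \<Rightarrow> (nat \<Rightarrow> nat) \<Rightarrow> nat \<Rightarrow> nat \<Rightarrow> nat \<Rightarrow> rat" where
  "dcoef r a D = (THE d. (\<forall>m\<ge>r. d m = (\<lambda>_. 0)) \<and>
       (\<forall>m n. d m (n + D) = d m n) \<and>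
       (\<forall>n. of_nat (pfun r a n) = (\<Sum>m<r. d m n * of_nat n ^ m)))"

definition Ppoly :: "nat \<Rightarrow> (nat \<Rightarrow> nat) \<Rightarrow> nat \<Rightarrow> complex \<Rightarrow> complex poly" where
  "Ppoly r a D = (THE P. (\<forall>z. z ^ D \<noteq> 1 \<longrightarrow> P z = 0) \<and>
       (\<forall>n. of_nat (pfun r a n) =
              (\<Sum>z\<in>{z::complex. z ^ D = 1}. poly (P z) (of_nat n) * inverse z ^ n)))"

definition rho :: "nat \<Rightarrow> complex" where
  "rho j = exp (2 * of_real pi * \<i> / of_nat j)"

definition wave :: "nat \<Rightarrow> (nat \<Rightarrow> nat) \<Rightarrow> nat \<Rightarrow> nat \<Rightarrow> nat \<Rightarrow> complex" where
  "wave r a D j n = poly (Ppoly r a D (rho j)) (of_nat n) * inverse (rho j) ^ n"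

definition mult_j :: "nat \<Rightarrow> (nat \<Rightarrow> nat) \<Rightarrow> nat \<Rightarrow> nat" where
  "mult_j r a j = card {i. i < r \<and> j dvd a i}"

definition Rcoef :: "nat \<Rightarrow> (nat \<Rightarrow> nat) \<Rightarrow> nat \<Rightarrow> nat \<Rightarrow> nat \<Rightarrow> complex" where
  "Rcoef r a D j m = (1 / of_nat D) *
     (\<Sum>v<D. rho j ^ v * of_rat (dcoef r a D (m - 1) v))"

end

theory Submission
  imports Defs "HOL-Analysis.Complex_Transcendental"
begin

text \<open>
  Write \<open>\<Delta>\<^sub>a f n = f (n + a) - f n\<close>. The recursion
  \<open>p\<^sub>r\<^sub>+\<^sub>1 (n + a\<^sub>r) - p\<^sub>r\<^sub>+\<^sub>1 n = p\<^sub>r (n + a\<^sub>r)\<close> shows that every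
  \<open>k \<mapsto> p (v + k D)\<close> has vanishing \<open>r\<close>-th difference, so the quasi-polynomial
  coefficients \<open>d\<^sub>m\<close> exist, and that the product of all \<open>\<Delta>\<^sub>a\<^sub>i\<close> kills \<open>p\<close>.
  Expanding each \<open>D\<close>-periodic \<open>d\<^sub>m\<close> in a discrete Fourier series over the \<open>D\<close>-th roots
  of unity writes \<open>p\<close> as an exponential polynomial \<open>\<Sum>\<^sub>\<lambda> P\<^sub>\<lambda> n \<cdot> \<lambda>\<^sup>-\<^sup>n\<close>,
  the \<open>m\<close>-th coefficient of \<open>P\<^sub>\<lambda>\<close> being the Fourier coefficient of \<open>d\<^sub>m\<close> at \<open>\<lambda>\<close>;
  such representations are unique. On the component at \<open>\<lambda>\<close>, \<open>\<Delta>\<^sub>a\<close> acts as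
  \<open>P \<mapsto> \<lambda>\<^sup>-\<^sup>a P (x + a) - P\<close>, which keeps the degree if \<open>\<lambda>\<^sup>a \<noteq> 1\<close> and lowers it by
  exactly one if \<open>\<lambda>\<^sup>a = 1\<close>. As the product of the \<open>\<Delta>\<^sub>a\<^sub>i\<close> annihilates \<open>p\<close>,
  the degree of \<open>P\<^sub>\<lambda>\<close> is below the number of \<open>i\<close> with \<open>\<lambda>\<^bsup>a\<^sub>i\<^esup> = 1\<close>,
  which is \<open>m(j)\<close> for \<open>\<lambda> = \<rho>\<^sub>j\<close>.
\<close>

definition partitions :: "nat \<Rightarrow> (nat \<Rightarrow> nat) \<Rightarrow> nat \<Rightarrow> (nat \<Rightarrow> nat) set" where
  "partitions r a n = {x. (\<forall>i\<ge>r. x i = 0) \<and> (\<Sum>i<r. a i * x i) = n}"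

lemma pfun_eq_card_partitions: "pfun r a n = card (partitions r a n)"
  by (simp add: pfun_def partitions_def)

lemma finite_partitions:
  assumes "\<forall>i<r. a i > 0"
  shows "finite (partitions r a n)"
proof -
  have bound: "x i \<le> n" if x: "x \<in> partitions r a n" and i: "i < r" for x i
  proof -
    have "x i \<le> a i * x i" using assms i by (simp add: Suc_le_eq)
    also have "\<dots> \<le> (\<Sum>i<r. a i * x i)" using i by (intro member_le_sum) auto
    finally show ?thesis using x by (simp add: partitions_def)
  qed
  have "partitions r a n \<subseteq>
      {x. \<forall>i. (i \<in> {..<r} \<longrightarrow> x i \<in> {..n}) \<and> (i \<notin> {..<r} \<longrightarrow> x i = 0)}"
    using bound by (auto simp: partitions_def)
  then show ?thesis by (rule finite_subset) (rule finite_set_of_finite_funs; simp)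
qed

lemma pfun_0: "pfun 0 a n = (if n = 0 then 1 else 0)"
proof -
  have "partitions 0 a n = (if n = 0 then {\<lambda>_. 0} else {})" by (auto simp: partitions_def)
  then show ?thesis by (simp add: pfun_eq_card_partitions)
qed

lemma pfun_Suc_add:
  assumes "\<forall>i<Suc r. a i > 0"
  shows "pfun (Suc r) a (n + a r) = pfun (Suc r) a n + pfun r a (n + a r)"
proof -
  let ?A = "partitions (Suc r) a (n + a r)"
  have sum_upd: "(\<Sum>i<Suc r. a i * (x(r := v)) i) = (\<Sum>i<r. a i * x i) + a r * v" for x v
  proof -
    have "(\<Sum>i<r. a i * (x(r := v)) i) = (\<Sum>i<r. a i * x i)" by (intro sum.cong) auto
    then show ?thesis by simp
  qed
  have no_last_part: "{x \<in> ?A. x r = 0} = partitions r a (n + a r)"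
    by (auto simp: partitions_def) (metis le_antisym not_less_eq_eq)
  have "bij_betw (\<lambda>x. x(r := x r - 1)) {x \<in> ?A. x r \<noteq> 0} (partitions (Suc r) a n)"
  proof (rule bij_betw_byWitness[where f' = "\<lambda>y. y(r := Suc (y r))"])
    show "(\<lambda>x. x(r := x r - 1)) ` {x \<in> ?A. x r \<noteq> 0} \<subseteq> partitions (Suc r) a n"
    proof (rule image_subsetI)
      fix x assume "x \<in> {x \<in> ?A. x r \<noteq> 0}"
      then have x: "x \<in> ?A" "x r \<noteq> 0" by auto
      have "a r * (x r - 1) + a r = a r * x r" using x(2) by (cases "x r") auto
      then have "(\<Sum>i<Suc r. a i * (x(r := x r - 1)) i) + a r = (\<Sum>i<Suc r. a i * x i)"
        using sum_upd[of x "x r - 1"] sum_upd[of x "x r"] by simp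
      then show "x(r := x r - 1) \<in> partitions (Suc r) a n"
        using x(1) by (simp add: partitions_def)
    qed
    show "(\<lambda>y. y(r := Suc (y r))) ` partitions (Suc r) a n \<subseteq> {x \<in> ?A. x r \<noteq> 0}"
      by (auto simp: partitions_def sum_upd)
  qed (auto simp: fun_eq_iff)
  then have "card {x \<in> ?A. x r \<noteq> 0} = pfun (Suc r) a n"
    by (simp add: bij_betw_same_card pfun_eq_card_partitions)
  moreover have "card ?A = card ({x \<in> ?A. x r = 0} \<union> {x \<in> ?A. x r \<noteq> 0})"
    by (rule arg_cong[where f = card]) auto
  then have "card ?A = card {x \<in> ?A. x r = 0} + card {x \<in> ?A. x r \<noteq> 0}"
    using finite_partitions[OF assms] by (simp add: card_Un_disjoint disjoint_iff)
  ultimately show ?thesis by (simp add: pfun_eq_card_partitions no_last_part)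
qed

definition fwd_diff :: "(nat \<Rightarrow> 'a::ab_group_add) \<Rightarrow> nat \<Rightarrow> 'a" where
  "fwd_diff f n = f (Suc n) - f n"

lemma fwd_diff_funpow_shift: "(fwd_diff ^^ t) (\<lambda>n. f (n + s)) = (\<lambda>n. (fwd_diff ^^ t) f (n + s))"
  by (induction t) (simp_all add: fwd_diff_def)

lemma fwd_diff_funpow_sum:
  "(fwd_diff ^^ t) (\<lambda>n. \<Sum>s\<in>S. f s n) = (\<lambda>n. \<Sum>s\<in>S. (fwd_diff ^^ t) (f s) n)"
  by (induction t) (simp_all add: fwd_diff_def fun_eq_iff sum_subtractf)

lemma fwd_diff_funpow_zero: "(fwd_diff ^^ t) (\<lambda>_. 0) = (\<lambda>_. 0 :: 'a::ab_group_add)"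
  by (induction t) (simp_all add: fwd_diff_def)

lemma newton_forward_formula:
  fixes f :: "nat \<Rightarrow> 'a::comm_ring_1"
  shows "f k = (\<Sum>t\<le>k. of_nat (k choose t) * (fwd_diff ^^ t) f 0)"
proof (induction k arbitrary: f)
  case 0
  then show ?case by simp
next
  case (Suc k)
  define A where "A t = (fwd_diff ^^ t) f 0" for t
  have shift: "(fwd_diff ^^ t) (\<lambda>n. f (Suc n)) 0 = A t + A (Suc t)" for t
    using fwd_diff_funpow_shift[of t f 1] by (simp add: A_def fwd_diff_def fun_eq_iff)
  have "f (Suc k) = (\<Sum>t\<le>k. of_nat (k choose t) * (A t + A (Suc t)))"
    using Suc[of "\<lambda>n. f (Suc n)"] by (simp add: shift)
  also have "\<dots> = (\<Sum>t\<le>Suc k. of_nat (k choose t) * A t)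
                   + (\<Sum>t\<le>k. of_nat (k choose t) * A (Suc t))"
    by (simp add: distrib_left sum.distrib binomial_eq_0)
  also have "(\<Sum>t\<le>Suc k. of_nat (k choose t) * A t)
               = A 0 + (\<Sum>t\<le>k. of_nat (k choose Suc t) * A (Suc t))"
    by (subst sum.atMost_Suc_shift) simp
  also have "A 0 + (\<Sum>t\<le>k. of_nat (k choose Suc t) * A (Suc t))
               + (\<Sum>t\<le>k. of_nat (k choose t) * A (Suc t))
             = (\<Sum>t\<le>Suc k. of_nat (Suc k choose t) * A t)"
    by (simp only: sum.atMost_Suc_shift[where n = k]) (simp add: sum.distrib[symmetric] algebra_simps)
  finally show ?case by (simp add: A_def)
qed

definition binomial_poly :: "nat \<Rightarrow> 'a::field_char_0 poly" where
  "binomial_poly t = smult (1 / fact t) (\<Prod>i<t. [:- of_nat i, 1:])"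

lemma poly_binomial_poly: "poly (binomial_poly t) (of_nat k) = of_nat (k choose t)"
proof -
  have "poly (binomial_poly t) (of_nat k) = (\<Prod>i = 0..<t. of_nat k - of_nat i) / fact t"
    by (simp add: binomial_poly_def poly_prod atLeast0LessThan)
  also have "\<dots> = of_nat k gchoose t"
    by (simp add: gbinomial_mult_fact'[symmetric])
  finally show ?thesis by (simp add: binomial_gbinomial)
qed

lemma degree_binomial_poly: "degree (binomial_poly t) \<le> t"
proof -
  have "degree (\<Prod>i<t. [:- of_nat i, 1:] :: 'a poly) \<le> (\<Sum>i<t. degree [:- of_nat i, 1 :: 'a:])"
    by (rule degree_prod_sum_le[simplified comp_def]) simp
  then show ?thesis
    unfolding binomial_poly_def by (simp add: degree_smult_le order_trans)
qed

lemma poly_eq_sum_lessThan: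
  fixes p :: "'a::comm_semiring_1 poly"
  assumes "\<forall>m\<ge>r. coeff p m = 0"
  shows "poly p x = (\<Sum>m<r. coeff p m * x ^ m)"
proof -
  have "poly p x = (\<Sum>m\<le>degree p. coeff p m * x ^ m)" by (rule poly_altdef)
  also have "\<dots> = (\<Sum>m<max r (Suc (degree p)). coeff p m * x ^ m)"
    by (rule sum.mono_neutral_left) (auto simp: coeff_eq_0)
  also have "\<dots> = (\<Sum>m<r. coeff p m * x ^ m)"
    by (rule sum.mono_neutral_right) (auto simp: assms)
  finally show ?thesis .
qed

lemma fwd_diff_funpow_eq_0_imp_poly:
  fixes f :: "nat \<Rightarrow> 'a::field_char_0"
  assumes "(fwd_diff ^^ r) f = (\<lambda>_. 0)"
  shows "\<exists>p. (\<forall>m\<ge>r. coeff p m = 0) \<and> (\<forall>k. f k = poly p (of_nat k))"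
proof -
  define c where "c t = (fwd_diff ^^ t) f 0" for t
  have c_eq_0: "c t = 0" if "t \<ge> r" for t
  proof -
    have "(fwd_diff ^^ t) f = (fwd_diff ^^ (t - r)) ((fwd_diff ^^ r) f)"
      using that by (metis funpow_add le_add_diff_inverse2 comp_apply)
    then show ?thesis by (simp add: c_def assms fwd_diff_funpow_zero)
  qed
  define p where "p = (\<Sum>t<r. smult (c t) (binomial_poly t))"
  have "f k = poly p (of_nat k)" for k
  proof -
    have "f k = (\<Sum>t\<le>k. of_nat (k choose t) * c t)"
      using newton_forward_formula[of f k] by (simp add: c_def)
    also have "\<dots> = (\<Sum>t<r. of_nat (k choose t) * c t)"
      by (rule sum.mono_neutral_cong) (auto simp: c_eq_0 binomial_eq_0 not_le)
    also have "\<dots> = poly p (of_nat k)"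
      by (simp add: p_def poly_sum poly_binomial_poly mult.commute)
    finally show ?thesis .
  qed
  moreover have "coeff p m = 0" if "m \<ge> r" for m
  proof -
    have "coeff (binomial_poly t :: 'a poly) m = 0" if "t < r" for t
      using degree_binomial_poly[of t, where 'a = 'a] \<open>m \<ge> r\<close> that
      by (intro coeff_eq_0) linarith
    then show ?thesis by (simp add: p_def coeff_sum)
  qed
  ultimately show ?thesis by blast
qed

lemma pfun_add_mult_diff:
  assumes "\<forall>i<Suc r. a i > 0"
  shows "(of_nat (pfun (Suc r) a (n + q * a r)) :: 'a::comm_ring_1) - of_nat (pfun (Suc r) a n)
         = (\<Sum>t<q. of_nat (pfun r a (n + Suc t * a r)))"
proof -
  let ?F = "\<lambda>t. (of_nat (pfun (Suc r) a (n + t * a r)) :: 'a)"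
  have "?F (Suc t) - ?F t = of_nat (pfun r a (n + Suc t * a r))" for t
    using pfun_Suc_add[OF assms, of "n + t * a r"] by (simp add: algebra_simps)
  then have "(\<Sum>t<q. of_nat (pfun r a (n + Suc t * a r))) = (\<Sum>t<q. ?F (Suc t) - ?F t)"
    by simp
  also have "\<dots> = ?F q - ?F 0" by (rule sum_lessThan_telescope)
  finally show ?thesis by simp
qed

lemma fwd_diff_pfun_progression:
  assumes "\<forall>i<Suc r. a i > 0" and "D = a r * q"
  shows "fwd_diff (\<lambda>k. of_nat (pfun (Suc r) a (v + k * D)) :: 'a::comm_ring_1)
         = (\<lambda>k. \<Sum>t<q. of_nat (pfun r a ((v + Suc t * a r) + k * D)))"
proof
  fix k
  have "fwd_diff (\<lambda>k. of_nat (pfun (Suc r) a (v + k * D)) :: 'a) k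
      = of_nat (pfun (Suc r) a ((v + k * D) + q * a r)) - of_nat (pfun (Suc r) a (v + k * D))"
    by (simp add: fwd_diff_def assms(2) algebra_simps)
  also have "\<dots> = (\<Sum>t<q. of_nat (pfun r a ((v + k * D) + Suc t * a r)))"
    by (rule pfun_add_mult_diff[OF assms(1)])
  finally show "fwd_diff (\<lambda>k. of_nat (pfun (Suc r) a (v + k * D)) :: 'a) k
      = (\<Sum>t<q. of_nat (pfun r a ((v + Suc t * a r) + k * D)))"
    by (simp add: algebra_simps)
qed

lemma fwd_diff_funpow_pfun_progression:
  assumes "r > 0" and "\<forall>i<r. a i > 0" and "\<forall>i<r. a i dvd D"
  shows "(fwd_diff ^^ r) (\<lambda>k. of_nat (pfun r a (v + k * D)) :: 'a::comm_ring_1) = (\<lambda>_. 0)"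
  using assms
proof (induction r arbitrary: v rule: nat_induct_non_zero)
  case 1
  then obtain q where "D = a 0 * q" by auto
  moreover have "pfun 0 a (v + Suc t * a 0 + k * D) = 0" for t k
    using 1 by (simp add: pfun_0)
  ultimately show ?case
    using fwd_diff_pfun_progression[of 0 a D q v] 1 by simp
next
  case (Suc r)
  have "a r dvd D" using Suc.prems(2) by simp
  then obtain q where q: "D = a r * q" ..
  have "(fwd_diff ^^ Suc r) (\<lambda>k. of_nat (pfun (Suc r) a (v + k * D)) :: 'a)
      = (fwd_diff ^^ r) (fwd_diff (\<lambda>k. of_nat (pfun (Suc r) a (v + k * D))))"
    by (simp only: funpow_Suc_right comp_apply)
  also have "\<dots> = (fwd_diff ^^ r) (\<lambda>k. \<Sum>t<q. of_nat (pfun r a ((v + Suc t * a r) + k * D)))"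
    by (simp only: fwd_diff_pfun_progression[OF Suc.prems(1) q])
  also have "\<dots> = (\<lambda>_. 0)"
    using Suc by (simp add: fwd_diff_funpow_sum)
  finally show ?case .
qed

definition quasi_coeffs :: "nat \<Rightarrow> nat \<Rightarrow> (nat \<Rightarrow> 'a) \<Rightarrow> (nat \<Rightarrow> nat \<Rightarrow> 'a::semiring_1) \<Rightarrow> bool" where
  "quasi_coeffs r D f d \<longleftrightarrow> (\<forall>m\<ge>r. d m = (\<lambda>_. 0)) \<and> (\<forall>m n. d m (n + D) = d m n) \<and>
     (\<forall>n. f n = (\<Sum>m<r. d m n * of_nat n ^ m))"

lemma periodic_add_mult:
  fixes f :: "nat \<Rightarrow> 'a" and D :: nat
  assumes "\<forall>n. f (n + D) = f n"
  shows "f (n + k * D) = f n"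
  by (induction k) (simp_all add: assms add.assoc[symmetric] add.commute[of D])

lemma periodic_mod:
  fixes f :: "nat \<Rightarrow> 'a" and D :: nat
  assumes "\<forall>n. f (n + D) = f n"
  shows "f (n mod D) = f n"
  using periodic_add_mult[OF assms, of "n mod D" "n div D"] by (simp add: mod_div_mult_eq)

lemma poly_eq_0_if_vanishes_on_progression:
  fixes p :: "'a::{idom,ring_char_0} poly"
  assumes "D > 0" and "\<And>k. poly p (of_nat (n + k * D)) = 0"
  shows "p = 0"
proof (rule ccontr)
  assume "p \<noteq> 0"
  have "inj (\<lambda>k. of_nat (n + k * D) :: 'a)"
    using assms(1) by (auto simp: inj_on_def)
  then have "infinite (range (\<lambda>k. of_nat (n + k * D) :: 'a))"
    by (rule range_inj_infinite)
  moreover have "range (\<lambda>k. of_nat (n + k * D) :: 'a) \<subseteq> {x. poly p x = 0}"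
    using assms(2) by auto
  ultimately show False
    using poly_roots_finite[OF \<open>p \<noteq> 0\<close>] finite_subset by blast
qed

lemma quasi_coeffs_unique:
  fixes f :: "nat \<Rightarrow> 'a::{idom,ring_char_0}"
  assumes "D > 0" and "quasi_coeffs r D f d" and "quasi_coeffs r D f d'"
  shows "d = d'"
proof (intro ext)
  fix m n
  show "d m n = d' m n"
  proof (cases "m < r")
    case False
    then show ?thesis using assms(2,3) by (simp add: quasi_coeffs_def)
  next
    case True
    define p where "p = (\<Sum>i<r. monom (d i n - d' i n) i)"
    obtain periodic: "\<And>i n. d i (n + D) = d i n" "\<And>i n. d' i (n + D) = d' i n"
      and expand: "\<And>n. f n = (\<Sum>i<r. d i n * of_nat n ^ i)" "\<And>n. f n = (\<Sum>i<r. d' i n * of_nat n ^ i)"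
      using assms(2,3) by (simp add: quasi_coeffs_def)
    have poly_p: "poly p x = (\<Sum>i<r. d i n * x ^ i) - (\<Sum>i<r. d' i n * x ^ i)" for x
      by (simp add: p_def poly_sum poly_monom algebra_simps sum_subtractf)
    have "poly p (of_nat (n + k * D)) = 0" for k
      using expand[of "n + k * D"] periodic_add_mult[of "d _" D] periodic_add_mult[of "d' _" D]
      by (simp add: poly_p periodic)
    then have "p = 0"
      by (rule poly_eq_0_if_vanishes_on_progression[OF assms(1)])
    then have "coeff p m = 0" by simp
    then show ?thesis using True by (simp add: p_def coeff_sum)
  qed
qed

lemma quasi_coeffs_exists:
  fixes f :: "nat \<Rightarrow> 'a::field_char_0"
  assumes "D > 0"
    and "\<And>v. \<exists>p. (\<forall>m\<ge>r. coeff p m = 0) \<and> (\<forall>k. f (v + k * D) = poly p (of_nat k))"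
  shows "\<exists>d. quasi_coeffs r D f d"
proof -
  obtain p where p: "\<And>v m. m \<ge> r \<Longrightarrow> coeff (p v) m = 0"
    and f_p: "\<And>v k. f (v + k * D) = poly (p v) (of_nat k)"
    using assms(2) by metis
  \<comment> \<open>Substitute \<open>k = (n - v) / D\<close>.\<close>
  define q where "q v = p v \<circ>\<^sub>p [:- of_nat v / of_nat D, 1 / of_nat D:]" for v
  have coeff_q: "coeff (q v) m = 0" if "m \<ge> r" for v m
  proof (cases "p v = 0")
    case False
    then have "degree (p v) < r" using p by (metis leading_coeff_0_iff not_le)
    moreover have "degree (q v) = degree (p v)"
      using assms(1) by (simp add: q_def degree_pcompose)
    ultimately show ?thesis using that by (intro coeff_eq_0) linarith
  qed (simp add: q_def)
  have f_q: "f (v + k * D) = poly (q v) (of_nat (v + k * D))" for v k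
  proof -
    have "poly [:- of_nat v / of_nat D, 1 / of_nat D:] (of_nat (v + k * D)) = (of_nat k :: 'a)"
      using assms(1) by (simp add: field_simps)
    then show ?thesis by (simp add: q_def poly_pcompose f_p)
  qed
  define d where "d m n = coeff (q (n mod D)) m" for m n
  have "f n = (\<Sum>m<r. d m n * of_nat n ^ m)" for n
    using f_q[of "n mod D" "n div D"] poly_eq_sum_lessThan[of r "q (n mod D)"] coeff_q
    by (simp add: d_def)
  then have "quasi_coeffs r D f d"
    by (simp add: quasi_coeffs_def d_def coeff_q fun_eq_iff)
  then show ?thesis by blast
qed

lemma quasi_coeffs_dcoef:
  assumes "r \<ge> 1" and "\<forall>i<r. a i > 0" and "D > 0" and "\<forall>i<r. a i dvd D"
  shows "quasi_coeffs r D (\<lambda>n. of_nat (pfun r a n)) (dcoef r a D)"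
proof -
  have "\<exists>d. quasi_coeffs r D (\<lambda>n. of_nat (pfun r a n) :: rat) d"
    using assms by (intro quasi_coeffs_exists fwd_diff_funpow_eq_0_imp_poly
        fwd_diff_funpow_pfun_progression) auto
  then obtain d :: "nat \<Rightarrow> nat \<Rightarrow> rat" where d: "quasi_coeffs r D (\<lambda>n. of_nat (pfun r a n)) d" ..
  have "dcoef r a D = (THE d. quasi_coeffs r D (\<lambda>n. of_nat (pfun r a n)) d)"
    by (simp add: dcoef_def quasi_coeffs_def)
  also have "\<dots> = d"
    using d quasi_coeffs_unique[OF assms(3)] by (intro the_equality) blast+
  finally show ?thesis using d by simp
qed

definition shift_diff :: "'a \<Rightarrow> 'a \<Rightarrow> 'a::comm_ring_1 poly \<Rightarrow> 'a poly" where
  "shift_diff c b p = smult c (p \<circ>\<^sub>p [:b, 1:]) - p"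

lemma poly_shift_diff: "poly (shift_diff c b p) x = c * poly p (x + b) - poly p x"
  by (simp add: shift_diff_def poly_pcompose algebra_simps)

lemma shift_diff_0 [simp]: "shift_diff c b 0 = 0"
  by (simp add: shift_diff_def)

lemma coeff_pcompose_shift:
  fixes p :: "'a::idom poly"
  assumes "degree p = Suc d"
  shows "coeff (p \<circ>\<^sub>p [:b, 1:]) d = coeff p d + b * of_nat (Suc d) * lead_coeff p"
  using assms
proof (induction p arbitrary: d rule: pCons_induct)
  case 0
  then show ?case by simp
next
  case (pCons c p)
  have "p \<noteq> 0" and deg_p: "degree p = d" using pCons.prems by (auto split: if_splits)
  let ?q = "[:b, 1:] :: 'a poly"
  have comp: "pCons c p \<circ>\<^sub>p ?q = [:c:] + (smult b (p \<circ>\<^sub>p ?q) + pCons 0 (p \<circ>\<^sub>p ?q))"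
    by (simp add: pcompose_pCons algebra_simps)
  have lead: "coeff (p \<circ>\<^sub>p ?q) d = lead_coeff p"
    using lead_coeff_comp[of ?q p] by (simp add: degree_pcompose deg_p)
  show ?case
  proof (cases d)
    case 0
    then obtain e where "p = [:e:]" using deg_p by (metis degree_eq_zeroE)
    then show ?thesis using 0 \<open>p \<noteq> 0\<close> by (simp add: comp)
  next
    case (Suc d')
    have "coeff (p \<circ>\<^sub>p ?q) d' = coeff p d' + b * of_nat (Suc d') * lead_coeff p"
      using pCons.IH[of d'] deg_p Suc by simp
    then show ?thesis
      using lead Suc \<open>p \<noteq> 0\<close> by (simp add: comp algebra_simps)
  qed
qed

lemma shift_diff_degree_eq:
  fixes p :: "'a::idom poly"
  assumes "c \<noteq> 1" and "p \<noteq> 0"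
  shows "shift_diff c b p \<noteq> 0 \<and> degree (shift_diff c b p) = degree p"
proof -
  let ?q = "[:b, 1:] :: 'a poly"
  have deg: "degree (p \<circ>\<^sub>p ?q) = degree p" by (simp add: degree_pcompose)
  have "coeff (shift_diff c b p) (degree p) = (c - 1) * lead_coeff p"
    using lead_coeff_comp[of ?q p] deg by (simp add: shift_diff_def algebra_simps)
  then have top: "coeff (shift_diff c b p) (degree p) \<noteq> 0"
    using assms by simp
  have "degree (shift_diff c b p) \<le> degree p"
    unfolding shift_diff_def using deg by (intro degree_diff_le) (auto simp: degree_smult_le)
  with top show ?thesis by (auto intro: le_antisym le_degree)
qed

lemma shift_diff_1_degree:
  fixes p :: "'a::{idom,ring_char_0} poly"
  assumes "degree p = Suc d" and "b \<noteq> 0"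
  shows "shift_diff 1 b p \<noteq> 0 \<and> degree (shift_diff 1 b p) = d"
proof -
  let ?q = "[:b, 1:] :: 'a poly"
  have "p \<noteq> 0" using assms(1) by auto
  have deg: "degree (p \<circ>\<^sub>p ?q) = degree p" by (simp add: degree_pcompose)
  have lead: "lead_coeff (p \<circ>\<^sub>p ?q) = lead_coeff p"
    using lead_coeff_comp[of ?q p] by simp
  \<comment> \<open>The leading terms cancel; the next coefficient comes from the binomial expansion.\<close>
  have "coeff (shift_diff 1 b p) d = b * of_nat (Suc d) * lead_coeff p"
    using coeff_pcompose_shift[OF assms(1)] by (simp add: shift_diff_def)
  then have top: "coeff (shift_diff 1 b p) d \<noteq> 0"
    using assms(2) \<open>p \<noteq> 0\<close> by (simp del: of_nat_Suc)
  have "coeff (shift_diff 1 b p) i = 0" if "i > d" for i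
  proof (cases "i = Suc d")
    case True
    then show ?thesis using deg lead assms(1) by (simp add: shift_diff_def)
  next
    case False
    then show ?thesis
      using that deg assms(1) by (simp add: shift_diff_def coeff_eq_0)
  qed
  then have "degree (shift_diff 1 b p) \<le> d" by (intro degree_le) auto
  with top show ?thesis by (auto intro: le_antisym le_degree)
qed

lemma shift_diff_1_const:
  assumes "degree p = 0"
  shows "shift_diff 1 b p = 0"
proof -
  obtain c where "p = [:c:]" using assms by (metis degree_eq_zeroE)
  then show ?thesis by (simp add: shift_diff_def)
qed

definition exppoly :: "'a set \<Rightarrow> ('a \<Rightarrow> 'a poly) \<Rightarrow> nat \<Rightarrow> 'a::field" where
  "exppoly U P n = (\<Sum>z\<in>U. poly (P z) (of_nat n) * inverse z ^ n)"

lemma exppoly_shift_diff: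
  "c * exppoly U P (n + a) - exppoly U P n
     = exppoly U (\<lambda>z. shift_diff (c * inverse z ^ a) (of_nat a) (P z)) n"
  by (simp add: exppoly_def poly_shift_diff sum_distrib_left sum_subtractf
      power_add algebra_simps)

lemma exppoly_eq_0_imp_eq_0:
  fixes P :: "'a \<Rightarrow> 'a::field_char_0 poly"
  assumes "finite U" and "0 \<notin> U" and "\<And>n. exppoly U P n = 0" and "z \<in> U"
  shows "P z = 0"
  using assms(3,4)
proof (induction "\<Sum>w\<in>U. length (coeffs (P w))" arbitrary: P z rule: less_induct)
  case less
  show ?case
  proof (rule ccontr)
    assume "P z \<noteq> 0"
    have "z \<noteq> 0" using less.prems(2) assms(2) by auto
    \<comment> \<open>Twisting by \<open>z\<close> keeps the size of every other component and shrinks the one at \<open>z\<close>.\<close>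
    define Q where "Q w = shift_diff (z * inverse w) 1 (P w)" for w
    have "exppoly U Q n = 0" for n
      unfolding Q_def using exppoly_shift_diff[of z U P n 1] less.prems(1) by simp
    have same: "length (coeffs (Q w)) = length (coeffs (P w))" if "w \<in> U" "w \<noteq> z" for w
    proof -
      have "z * inverse w \<noteq> 1" using that assms(2) by (auto simp: field_simps)
      then show ?thesis
        using shift_diff_degree_eq[of "z * inverse w" "P w" 1]
        by (cases "P w = 0") (simp_all add: Q_def length_coeffs_degree)
    qed
    have smaller: "length (coeffs (Q z)) < length (coeffs (P z))"
    proof (cases "degree (P z)")
      case 0
      then show ?thesis
        using \<open>P z \<noteq> 0\<close> \<open>z \<noteq> 0\<close> by (simp add: Q_def shift_diff_1_const length_coeffs_degree)
    next
      case (Suc d)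
      then show ?thesis
        using \<open>P z \<noteq> 0\<close> \<open>z \<noteq> 0\<close> shift_diff_1_degree[OF Suc, of 1]
        by (simp add: Q_def length_coeffs_degree)
    qed
    have "length (coeffs (Q w)) \<le> length (coeffs (P w))" if "w \<in> U" for w
      using same[OF that] smaller by (cases "w = z") auto
    then have "(\<Sum>w\<in>U. length (coeffs (Q w))) < (\<Sum>w\<in>U. length (coeffs (P w)))"
      using assms(1) less.prems(2) smaller by (intro sum_strict_mono_ex1) auto
    then have "Q w = 0" if "w \<in> U" for w
      using less.hyps \<open>\<And>n. exppoly U Q n = 0\<close> that by blast
    then have others: "P w = 0" if "w \<in> U - {z}" for w
      using same that by fastforce
    have "poly (P z) (of_nat n) = 0" for n
    proof -
      have "exppoly U P n = poly (P z) (of_nat n) * inverse z ^ n"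
        using assms(1) less.prems(2) others by (simp add: exppoly_def sum.remove)
      then show ?thesis using less.prems(1) \<open>z \<noteq> 0\<close> by simp
    qed
    then have "P z = 0"
      using poly_eq_0_if_vanishes_on_progression[of 1 "P z" 0] by simp
    with \<open>P z \<noteq> 0\<close> show False ..
  qed
qed

fun multi_diff :: "(nat \<Rightarrow> nat) \<Rightarrow> nat \<Rightarrow> (nat \<Rightarrow> 'a::ab_group_add) \<Rightarrow> nat \<Rightarrow> 'a" where
  "multi_diff a 0 f = f"
| "multi_diff a (Suc k) f = multi_diff a k (\<lambda>n. f (n + a k) - f n)"

fun twisted_multi_diff :: "(nat \<Rightarrow> nat) \<Rightarrow> 'a \<Rightarrow> nat \<Rightarrow> 'a poly \<Rightarrow> 'a::field poly" where
  "twisted_multi_diff a z 0 p = p"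
| "twisted_multi_diff a z (Suc k) p =
     twisted_multi_diff a z k (shift_diff (inverse z ^ a k) (of_nat (a k)) p)"

lemma multi_diff_shift: "multi_diff a k (\<lambda>n. f (n + s)) = (\<lambda>n. multi_diff a k f (n + s))"
proof (induction k arbitrary: f)
  case (Suc k)
  show ?case using Suc.IH[of "\<lambda>m. f (m + a k) - f m"] by (simp add: ac_simps)
qed simp

lemma multi_diff_pfun:
  assumes "\<forall>i<k. a i > 0"
  shows "multi_diff a k (\<lambda>n. of_nat (pfun k a n) :: 'a::comm_ring_1)
         = (\<lambda>n. of_nat (pfun 0 a (n + (\<Sum>i<k. a i))))"
  using assms
proof (induction k)
  case (Suc k)
  have "(\<lambda>n. of_nat (pfun (Suc k) a (n + a k)) - of_nat (pfun (Suc k) a n) :: 'a)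
        = (\<lambda>n. of_nat (pfun k a (n + a k)))"
    using pfun_Suc_add[OF Suc.prems] by (simp add: fun_eq_iff)
  then have "multi_diff a (Suc k) (\<lambda>n. of_nat (pfun (Suc k) a n) :: 'a)
           = multi_diff a k (\<lambda>n. of_nat (pfun k a (n + a k)))"
    by simp
  also have "\<dots> = (\<lambda>n. multi_diff a k (\<lambda>n. of_nat (pfun k a n)) (n + a k))"
    by (rule multi_diff_shift)
  finally show ?case using Suc by (simp add: ac_simps)
qed simp

lemma multi_diff_exppoly:
  "multi_diff a k (exppoly U P) = exppoly U (\<lambda>z. twisted_multi_diff a z k (P z))"
proof (induction k arbitrary: P)
  case (Suc k)
  have "(\<lambda>n. exppoly U P (n + a k) - exppoly U P n)
        = exppoly U (\<lambda>z. shift_diff (inverse z ^ a k) (of_nat (a k)) (P z))"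
    using exppoly_shift_diff[of 1 U P _ "a k"] by (simp add: fun_eq_iff)
  then show ?case using Suc.IH by simp
qed (simp add: fun_eq_iff)

lemma card_less_Suc_filter:
  "card {i. i < Suc k \<and> Q i} = card {i. i < k \<and> Q i} + (if Q k then 1 else 0)"
proof (cases "Q k")
  case True
  then have "{i. i < Suc k \<and> Q i} = insert k {i. i < k \<and> Q i}" by (auto simp: less_Suc_eq)
  then show ?thesis using True by simp
next
  case False
  then have "{i. i < Suc k \<and> Q i} = {i. i < k \<and> Q i}" by (auto simp: less_Suc_eq)
  then show ?thesis using False by simp
qed

lemma degree_twisted_multi_diff:
  fixes p :: "'a::field_char_0 poly"
  assumes "\<forall>i<k. a i > 0" and "p \<noteq> 0" and "card {i. i < k \<and> z ^ a i = 1} \<le> degree p"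
  shows "twisted_multi_diff a z k p \<noteq> 0
         \<and> degree (twisted_multi_diff a z k p) = degree p - card {i. i < k \<and> z ^ a i = 1}"
  using assms
proof (induction k arbitrary: p)
  case (Suc k)
  let ?u = "card {i. i < k \<and> z ^ a i = 1}"
  have pos: "\<forall>i<k. a i > 0" and "a k > 0" using Suc.prems(1) by auto
  show ?case
  proof (cases "z ^ a k = 1")
    case True
    then obtain d where d: "degree p = Suc d" and "?u \<le> d"
      using Suc.prems(3) by (cases "degree p") (auto simp: card_less_Suc_filter)
    then have "shift_diff 1 (of_nat (a k)) p \<noteq> 0 \<and> degree (shift_diff 1 (of_nat (a k)) p) = d"
      using \<open>a k > 0\<close> by (intro shift_diff_1_degree) auto
    then show ?thesis
      using Suc.IH[OF pos] True d \<open>?u \<le> d\<close> by (simp add: power_inverse card_less_Suc_filter)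
  next
    case False
    then have "inverse z ^ a k \<noteq> 1" by (simp add: power_inverse)
    then have "shift_diff (inverse z ^ a k) (of_nat (a k)) p \<noteq> 0
               \<and> degree (shift_diff (inverse z ^ a k) (of_nat (a k)) p) = degree p"
      using Suc.prems(2) by (rule shift_diff_degree_eq)
    then show ?thesis
      using Suc.IH[OF pos] Suc.prems(3) False by (simp add: card_less_Suc_filter)
  qed
qed simp

lemma rho_nonzero [simp]: "rho j \<noteq> 0"
  by (simp add: rho_def)

lemma rho_pow: "rho j ^ k = exp (2 * of_real pi * \<i> * of_nat k / of_nat j)"
  by (simp add: rho_def exp_of_nat_mult[symmetric] mult_ac)

lemma rho_pow_eq_iff: "j \<ge> 1 \<Longrightarrow> rho j ^ k = rho j ^ l \<longleftrightarrow> k mod j = l mod j"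
  by (simp add: rho_pow complex_root_unity_eq)

lemma rho_pow_eq_1_iff: "j \<ge> 1 \<Longrightarrow> rho j ^ k = 1 \<longleftrightarrow> j dvd k"
  by (simp add: rho_pow complex_root_unity_eq_1)

lemma bij_betw_rho_pow_roots_unity:
  assumes "D \<ge> 1"
  shows "bij_betw (\<lambda>t. rho D ^ t) {..<D} {z. z ^ D = 1}"
  using Complex_Transcendental.bij_betw_roots_unity[of D] complex_roots_unity[OF assms]
  by (simp add: rho_pow)

lemma sum_roots_unity_pow_inverse_pow:
  assumes "D \<ge> 1"
  shows "(\<Sum>z | z ^ D = 1. z ^ v * inverse z ^ n)
         = (if v mod D = n mod D then of_nat D else (0 :: complex))"
proof -
  define w where "w = rho D ^ v * inverse (rho D) ^ n"
  have "(\<Sum>z | z ^ D = 1. z ^ v * inverse z ^ n) = (\<Sum>t<D. (rho D ^ t) ^ v * inverse (rho D ^ t) ^ n)"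
    by (rule sum.reindex_bij_betw[OF bij_betw_rho_pow_roots_unity[OF assms], symmetric])
  also have "\<dots> = (\<Sum>t<D. w ^ t)"
    by (simp add: w_def power_mult_distrib power_inverse flip: power_mult) (simp add: mult.commute)
  also have "\<dots> = (if v mod D = n mod D then of_nat D else 0)"
  proof (cases "v mod D = n mod D")
    case True
    then have "w = 1"
      using rho_pow_eq_iff[OF assms, of v n] by (simp add: w_def power_inverse)
    then show ?thesis using True by simp
  next
    case False
    then have "w \<noteq> 1"
      using rho_pow_eq_iff[OF assms, of v n] by (auto simp: w_def power_inverse field_simps)
    moreover have "w ^ D = 1"
      using rho_pow_eq_1_iff[OF assms, of D]
      by (simp add: w_def power_mult_distrib power_inverse flip: power_mult) (simp add: mult.commute power_mult)
    ultimately show ?thesis using False by (simp add: sum_gp_strict)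
  qed
  finally show ?thesis .
qed

definition fourier_coeff :: "nat \<Rightarrow> (nat \<Rightarrow> complex) \<Rightarrow> complex \<Rightarrow> complex" where
  "fourier_coeff D f z = 1 / of_nat D * (\<Sum>v<D. z ^ v * f v)"

lemma periodic_fourier_expansion:
  assumes "D > 0" and "\<forall>n. f (n + D) = f n"
  shows "f n = (\<Sum>z | z ^ D = 1. fourier_coeff D f z * inverse z ^ n)"
proof -
  have "(\<Sum>z | z ^ D = 1. fourier_coeff D f z * inverse z ^ n)
      = (\<Sum>z | z ^ D = 1. \<Sum>v<D. f v / of_nat D * (z ^ v * inverse z ^ n))"
    by (simp add: fourier_coeff_def sum_distrib_left sum_distrib_right mult_ac)
  also have "\<dots> = (\<Sum>v<D. f v / of_nat D * (\<Sum>z | z ^ D = 1. z ^ v * inverse z ^ n))"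
    by (subst sum.swap) (simp add: sum_distrib_left)
  also have "\<dots> = (\<Sum>v<D. if v = n mod D then f v else 0)"
    using assms(1) by (intro sum.cong) (simp_all add: sum_roots_unity_pow_inverse_pow)
  also have "\<dots> = f (n mod D)" using assms(1) by simp
  also have "\<dots> = f n" using assms(2) by (rule periodic_mod)
  finally show ?thesis ..
qed

definition fourier_poly :: "nat \<Rightarrow> (nat \<Rightarrow> nat) \<Rightarrow> nat \<Rightarrow> complex \<Rightarrow> complex poly" where
  "fourier_poly r a D z =
     (if z ^ D = 1 then (\<Sum>m<r. monom (fourier_coeff D (\<lambda>v. of_rat (dcoef r a D m v)) z) m)
      else 0)"

lemma coeff_fourier_poly:
  "z ^ D = 1 \<Longrightarrow> m < r
   \<Longrightarrow> coeff (fourier_poly r a D z) m = fourier_coeff D (\<lambda>v. of_rat (dcoef r a D m v)) z"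
  by (simp add: fourier_poly_def coeff_sum)

lemma exppoly_roots_unity_eq_0_imp_eq_0:
  fixes P :: "complex \<Rightarrow> complex poly"
  assumes "D > 0" and "\<And>n. exppoly {z. z ^ D = 1} P n = 0" and "z ^ D = 1"
  shows "P z = 0"
  using assms by (intro exppoly_eq_0_imp_eq_0[of "{z. z ^ D = 1}"])
    (auto intro: finite_roots_unity simp: zero_power)

context
  fixes r D :: nat and a :: "nat \<Rightarrow> nat"
  assumes r_pos: "r \<ge> 1" and a_pos: "\<forall>i<r. a i > 0"
    and D_pos: "D > 0" and a_dvd_D: "\<forall>i<r. a i dvd D"
begin

lemma exppoly_fourier_poly: "exppoly {z. z ^ D = 1} (fourier_poly r a D) n = of_nat (pfun r a n)"
proof -
  let ?U = "{z::complex. z ^ D = 1}" and ?d = "\<lambda>m v. of_rat (dcoef r a D m v) :: complex"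
  have quasi: "quasi_coeffs r D (\<lambda>n. of_nat (pfun r a n)) (dcoef r a D)"
    using quasi_coeffs_dcoef r_pos a_pos D_pos a_dvd_D .
  have "exppoly ?U (fourier_poly r a D) n
      = (\<Sum>z\<in>?U. \<Sum>m<r. of_nat n ^ m * (fourier_coeff D (?d m) z * inverse z ^ n))"
    unfolding exppoly_def
    by (intro sum.cong) (simp_all add: fourier_poly_def poly_sum poly_monom
        sum_distrib_left sum_distrib_right mult_ac)
  also have "\<dots> = (\<Sum>m<r. of_nat n ^ m * (\<Sum>z\<in>?U. fourier_coeff D (?d m) z * inverse z ^ n))"
    by (subst sum.swap) (simp add: sum_distrib_left)
  also have "\<dots> = (\<Sum>m<r. of_nat n ^ m * ?d m n)"
    using quasi D_pos by (simp add: periodic_fourier_expansion[symmetric] quasi_coeffs_def)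
  also have "\<dots> = of_rat (\<Sum>m<r. dcoef r a D m n * of_nat n ^ m)"
    by (simp add: of_rat_sum of_rat_mult of_rat_power mult_ac)
  also have "\<dots> = of_nat (pfun r a n)"
    using quasi unfolding quasi_coeffs_def by (metis of_rat_of_nat_eq)
  finally show ?thesis .
qed

lemma Ppoly_eq_fourier_poly: "Ppoly r a D = fourier_poly r a D"
  unfolding Ppoly_def
proof (rule the_equality)
  let ?U = "{z::complex. z ^ D = 1}"
  show "(\<forall>z. z ^ D \<noteq> 1 \<longrightarrow> fourier_poly r a D z = 0) \<and>
        (\<forall>n. of_nat (pfun r a n) = (\<Sum>z\<in>?U. poly (fourier_poly r a D z) (of_nat n) * inverse z ^ n))"
    using exppoly_fourier_poly by (simp add: fourier_poly_def exppoly_def)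
  fix P assume P: "(\<forall>z. z ^ D \<noteq> 1 \<longrightarrow> P z = 0) \<and>
        (\<forall>n. of_nat (pfun r a n) = (\<Sum>z\<in>?U. poly (P z) (of_nat n) * inverse z ^ n))"
  have "exppoly ?U (\<lambda>z. P z - fourier_poly r a D z) n = 0" for n
    using P exppoly_fourier_poly[of n] by (simp add: exppoly_def algebra_simps sum_subtractf)
  then have "P z - fourier_poly r a D z = 0" if "z \<in> ?U" for z
    using D_pos that by (intro exppoly_roots_unity_eq_0_imp_eq_0) auto
  with P show "P = fourier_poly r a D"
    by (auto simp: fun_eq_iff fourier_poly_def)
qed

lemma coeff_fourier_poly_eq_0:
  assumes "z ^ D = 1" and "card {i. i < r \<and> z ^ a i = 1} \<le> m"
  shows "coeff (fourier_poly r a D z) m = 0"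
proof -
  let ?U = "{z::complex. z ^ D = 1}" and ?P = "fourier_poly r a D z"
  have "\<exists>i<r. a i \<noteq> 0" using r_pos a_pos by (intro exI[of _ 0]) auto
  then have annihilated: "multi_diff a r (\<lambda>n. of_nat (pfun r a n) :: complex) = (\<lambda>_. 0)"
    using a_pos by (auto simp: multi_diff_pfun pfun_0 fun_eq_iff)
  have "exppoly ?U (\<lambda>z. twisted_multi_diff a z r (fourier_poly r a D z))
        = multi_diff a r (exppoly ?U (fourier_poly r a D))"
    by (rule multi_diff_exppoly[symmetric])
  also have "exppoly ?U (fourier_poly r a D) = (\<lambda>n. of_nat (pfun r a n))"
    using exppoly_fourier_poly by (simp add: fun_eq_iff)
  also note annihilated
  finally have "exppoly ?U (\<lambda>z. twisted_multi_diff a z r (fourier_poly r a D z)) n = 0" for n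
    by simp
  then have "twisted_multi_diff a z r ?P = 0"
    by (rule exppoly_roots_unity_eq_0_imp_eq_0[OF D_pos _ assms(1)])
  then have "?P = 0 \<or> degree ?P < card {i. i < r \<and> z ^ a i = 1}"
    using degree_twisted_multi_diff[OF a_pos, of ?P z] by linarith
  then show ?thesis using assms(2) by (auto intro: coeff_eq_0)
qed

lemma poly_Ppoly:
  assumes "z ^ D = 1"
  shows "poly (Ppoly r a D z) x
         = (\<Sum>m<card {i. i < r \<and> z ^ a i = 1}. fourier_coeff D (\<lambda>v. of_rat (dcoef r a D m v)) z * x ^ m)"
proof -
  let ?c = "card {i. i < r \<and> z ^ a i = 1}"
  have "?c \<le> r" using card_mono[of "{..<r}" "{i. i < r \<and> z ^ a i = 1}"] by auto
  have "poly (Ppoly r a D z) x = (\<Sum>m<?c. coeff (fourier_poly r a D z) m * x ^ m)"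
    using assms by (simp add: Ppoly_eq_fourier_poly poly_eq_sum_lessThan coeff_fourier_poly_eq_0)
  also have "\<dots> = (\<Sum>m<?c. fourier_coeff D (\<lambda>v. of_rat (dcoef r a D m v)) z * x ^ m)"
    using assms \<open>?c \<le> r\<close> by (intro sum.cong) (simp_all add: coeff_fourier_poly)
  finally show ?thesis .
qed

end

theorem proposition4p1:
  fixes r D j :: nat and a :: "nat \<Rightarrow> nat"
  assumes "r \<ge> 1"
    and "\<forall>i<r. a i > 0"
    and "D > 0" and "\<forall>i<r. a i dvd D"
    and "j \<ge> 1" and "\<exists>i<r. j dvd a i"
  shows "\<forall>n::nat. wave r a D j n =
           inverse (rho j) ^ n *
           (\<Sum>m=1..mult_j r a j. Rcoef r a D j m * of_nat n ^ (m - 1))"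
proof
  fix n :: nat
  have "j dvd D" using assms(4,6) dvd_trans by blast
  then have root: "rho j ^ D = 1" using assms(5) by (simp add: rho_pow_eq_1_iff)
  have count: "card {i. i < r \<and> rho j ^ a i = 1} = mult_j r a j"
    using assms(5) by (simp add: rho_pow_eq_1_iff mult_j_def)
  have "poly (Ppoly r a D (rho j)) (of_nat n)
        = (\<Sum>m<mult_j r a j. Rcoef r a D j (Suc m) * of_nat n ^ m)"
    using poly_Ppoly[OF assms(1-4) root] by (simp add: count Rcoef_def fourier_coeff_def)
  also have "\<dots> = (\<Sum>m=1..mult_j r a j. Rcoef r a D j m * of_nat n ^ (m - 1))"
    by (simp add: sum.atLeast1_atMost_eq)
  finally show "wave r a D j n = inverse (rho j) ^ n *
           (\<Sum>m=1..mult_j r a j. Rcoef r a D j m * of_nat n ^ (m - 1))"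
    by (simp add: wave_def mult.commute)
qed

end
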